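(* Let $0<\alpha\leq2$ and let $X=(X_t)_{t\geq0}$ be a scalar symmetric $\alpha$-stable Lévy process with $X_0=0$ and $\mathbb{E}[e^{iuX_t}]=e^{-|u|^{\alpha}t}$. Let $Z,\tilde Z$ be independent random variables with characteristic function $u\mapsto e^{-|u|^\alpha}$, and define \[ \phi(x,y)=\mathbb{P}\bigl(Z\geq0,\ \tilde Z\geq0,\ x^{1/\alpha}Z\leq y^{1/\alpha}\tilde Z\bigr),\qquad x,y\geq0. \] Then for $0<r<t$, $\mathbb{P}(X_r\geq0,X_t\geq0)=\frac14+\phi(t-r,r)$. *)

theory Defs
  imports "HOL-Probability.Probability"
begin

definition levy_process :: "'a measure \<Rightarrow> (real \<Rightarrow> 'a \<Rightarrow> real) \<Rightarrow> bool" where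
  "levy_process M X \<longleftrightarrow>
     prob_space M \<and>
     (\<forall>t\<ge>0. X t \<in> borel_measurable M) \<and>
     (AE \<omega> in M. X 0 \<omega> = 0) \<and>
     (\<forall>(n::nat) (ts::nat \<Rightarrow> real). 0 \<le> ts 0 \<and> (\<forall>i<n. ts i < ts (Suc i)) \<longrightarrow>
        prob_space.indep_vars M (\<lambda>_. borel) (\<lambda>i \<omega>. X (ts (Suc i)) \<omega> - X (ts i) \<omega>) {..<n}) \<and>
     (\<forall>s t. 0 \<le> s \<and> s \<le> t \<longrightarrow>
        distr M borel (\<lambda>\<omega>. X t \<omega> - X s \<omega>) = distr M borel (X (t - s))) \<and>
     (\<forall>t\<ge>0. \<forall>e>0.
        ((\<lambda>s. measure M {\<omega>\<in>space M. \<bar>X s \<omega> - X t \<omega>\<bar> > e}) \<longlongrightarrow> 0) (at t within {0..}))"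

end

theory Submission
  imports Defs
begin

(* By stationarity and independence of increments and the scaling of the stable law,
   (X t - X r, X r) has the law of (b W, a W') with W, W' independent standard symmetric
   \<alpha>-stable variables, a = r powr (1/\<alpha>) and b = (t - r) powr (1/\<alpha>). The event
   {X r \<ge> 0, X t \<ge> 0} = {W' \<ge> 0, b W + a W' \<ge> 0} splits into the quadrant {W \<ge> 0, W' \<ge> 0},
   of probability 1/4 by symmetry, and a part with W < 0. The reflection W \<mapsto> -W preserves the
   law and maps that part onto {W > 0, W' \<ge> 0, b W \<le> a W'}; finally W = 0 is a null event,
   because the characteristic function exp (- \<bar>u\<bar> powr \<alpha>) vanishes at infinity. *)

lemma (in real_distribution) char_distr_mult: "char (distr M borel (\<lambda>x. c * x)) u = char M (c * u)"
  by (simp add: char_def integral_distr mult_ac)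

lemma (in real_distribution) distr_uminus_eq_if_char_even:
  assumes "\<And>u. char M (- u) = char M u"
  shows "distr M borel uminus = M"
proof (rule Levy_uniqueness)
  show "real_distribution (distr M borel uminus)"
    by (rule real_distribution_distr) simp
  show "char (distr M borel uminus) = char M"
    using assms by (simp add: fun_eq_iff char_def integral_distr)
qed (rule real_distribution_axioms)

lemma (in real_distribution) integral_exp_square_eq_integral_char:
  "complex_of_real (\<integral>x. exp (- ((c * x)\<^sup>2) / 2) \<partial>M)
    = (CLINT u|std_normal_distribution. char M (c * u))"
proof -
  let ?G = std_normal_distribution
  interpret G: real_distribution ?G by (rule real_dist_normal_dist)
  interpret P: pair_prob_space M ?G ..
  have int: "integrable (M \<Otimes>\<^sub>M ?G) (\<lambda>(x, u). iexp (c * x * u))"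
    by (rule P.P.integrable_const_bound[where B=1]) (auto simp: norm_exp_i_times)
  have "complex_of_real (\<integral>x. exp (- ((c * x)\<^sup>2) / 2) \<partial>M) = (CLINT x|M. char ?G (c * x))"
    unfolding char_std_normal_distribution by (simp add: integral_complex_of_real)
  also have "\<dots> = (CLINT x|M. CLINT u|?G. iexp (c * x * u))"
    by (simp add: char_def)
  also have "\<dots> = (CLINT u|?G. CLINT x|M. iexp (c * x * u))"
    using P.Fubini_integral[OF int] by simp
  also have "\<dots> = (CLINT u|?G. char M (c * u))"
    by (simp add: char_def mult_ac)
  finally show ?thesis .
qed

lemma (in real_distribution) measure_singleton_zero_if_char_vanishes:
  assumes vanish: "(char M \<longlongrightarrow> 0) at_infinity"
  shows "measure M {0} = 0"
proof -
  (* The Gaussian kernels exp (- (n x)^2 / 2) dominate the indicator of {0}, and their integrals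
     are averages of char M (n u), which tend to 0 by dominated convergence. *)
  let ?G = std_normal_distribution
  interpret G: real_distribution ?G by (rule real_dist_normal_dist)
  define h where "h n = (\<integral>x. exp (- ((real n * x)\<^sup>2) / 2) \<partial>M)" for n :: nat
  have "(\<lambda>n. CLINT u|?G. char M (real n * u)) \<longlonglongrightarrow> (CLINT u|?G. 0)"
  proof (rule integral_dominated_convergence[where w="\<lambda>_. 1"])
    have "AE u in ?G. u \<noteq> 0"
      using AE_lborel_singleton[of "0::real"] by (subst AE_density) (auto elim: AE_mp)
    then show "AE u in ?G. (\<lambda>n. char M (real n * u)) \<longlonglongrightarrow> 0"
    proof eventually_elim
      case (elim u)
      have "filterlim (\<lambda>n. real n * u) at_infinity sequentially"
        unfolding filterlim_at_infinity_conv_norm_at_top using elim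
        by (auto simp: abs_mult
            intro!: filterlim_at_top_mult_tendsto_pos[OF tendsto_const] filterlim_real_sequentially)
      then show ?case
        by (rule filterlim_compose[OF vanish])
    qed
  qed (auto intro: cmod_char_le_1)
  then have "(\<lambda>n. complex_of_real (h n)) \<longlonglongrightarrow> complex_of_real 0"
    unfolding h_def integral_exp_square_eq_integral_char by simp
  then have "h \<longlonglongrightarrow> 0"
    by (rule tendsto_of_real_iff[THEN iffD1])
  moreover have "measure M {0} \<le> h n" for n
  proof -
    have "measure M {0} = (\<integral>x. indicator {0} x \<partial>M)" by simp
    also have "\<dots> \<le> h n" unfolding h_def
      by (intro integral_mono integrable_const_bound[where B=1]) (auto split: split_indicator)
    finally show ?thesis .
  qed
  ultimately have "measure M {0} \<le> 0"
    by (intro LIMSEQ_le_const) auto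
  then show ?thesis
    using measure_nonneg[of M "{0}"] by linarith
qed

lemma filterlim_abs_powr_at_top_at_infinity:
  assumes "0 < \<alpha>"
  shows "filterlim (\<lambda>u::real. \<bar>u\<bar> powr \<alpha>) at_top at_infinity"
proof -
  have "eventually (\<lambda>u::real. exp (\<alpha> * ln (norm u)) = \<bar>u\<bar> powr \<alpha>) at_infinity"
    unfolding eventually_at_infinity by (rule exI[of _ 1]) (auto simp: powr_def)
  moreover have "filterlim (\<lambda>u::real. exp (\<alpha> * ln (norm u))) at_top at_infinity"
    by (intro filterlim_compose[OF exp_at_top]
        filterlim_tendsto_pos_mult_at_top[OF tendsto_const assms]
        filterlim_compose[OF ln_at_top filterlim_norm_at_top])
  ultimately show ?thesis
    by (simp add: filterlim_cong)
qed

lemma sets_borel_pair_Collect: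
  "Measurable.pred (borel \<Otimes>\<^sub>M borel) P \<Longrightarrow> Collect P \<in> sets (borel \<Otimes>\<^sub>M borel)"
  by (simp add: Measurable.pred_def space_pair_measure)

lemma (in real_distribution) prob_atLeast_0_eq_half:
  assumes "distr M borel uminus = M" and "prob {0} = 0"
  shows "prob {0..} = 1/2"
proof -
  have "prob {..0} = measure (distr M borel uminus) {..0}"
    using assms(1) by simp
  also have "\<dots> = prob (uminus -` {..0} \<inter> space M)"
    by (rule measure_distr) simp_all
  also have "uminus -` {..0::real} \<inter> space M = {0..}"
    by auto
  finally have "prob {..0} = prob {0..}" .
  moreover have "prob {0..} = prob {0<..} + prob {0}"
  proof -
    have "{0..} = {0<..} \<union> {0::real}"
      by auto
    then show ?thesis
      by (simp only:) (rule finite_measure_Union; simp)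
  qed
  moreover have "prob {0<..} = 1 - prob {..0}"
  proof -
    have "{0<..} = space M - {..0::real}"
      by auto
    then show ?thesis
      by (simp only:) (rule prob_compl; simp)
  qed
  ultimately show ?thesis
    using assms(2) by linarith
qed

lemma (in real_distribution) measure_pair_nonneg_quadrant:
  assumes "distr M borel uminus = M" and "prob {0} = 0"
  shows "measure (M \<Otimes>\<^sub>M M) {(y, x). 0 \<le> y \<and> 0 \<le> x} = 1/4"
proof -
  have "{(y, x). 0 \<le> y \<and> 0 \<le> x} = {0::real..} \<times> {0::real..}"
    by auto
  moreover have "measure (M \<Otimes>\<^sub>M M) ({0..} \<times> {0..}) = prob {0..} * prob {0..}"
    unfolding measure_def by (subst emeasure_pair_measure_Times) (simp_all add: enn2real_mult)
  ultimately show ?thesis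
    unfolding prob_atLeast_0_eq_half[OF assms] by simp
qed

lemma (in real_distribution) measure_pair_reflect_fst:
  assumes "distr M borel uminus = M" and "A \<in> sets (borel \<Otimes>\<^sub>M borel)"
  shows "measure (M \<Otimes>\<^sub>M M) ((\<lambda>(y, x). (- y, x)) -` A) = measure (M \<Otimes>\<^sub>M M) A"
proof -
  have "distr M borel uminus \<Otimes>\<^sub>M distr M borel (\<lambda>x. x)
      = distr (M \<Otimes>\<^sub>M M) (borel \<Otimes>\<^sub>M borel) (\<lambda>(y, x). (- y, x))"
    by (intro pair_measure_distr) (auto simp: distr_id2 intro: sigma_finite_measure)
  then have "measure (M \<Otimes>\<^sub>M M) A
      = measure (distr (M \<Otimes>\<^sub>M M) (borel \<Otimes>\<^sub>M borel) (\<lambda>(y, x). (- y, x))) A"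
    using assms(1) by (simp add: distr_id2)
  also have "\<dots> = measure (M \<Otimes>\<^sub>M M) ((\<lambda>(y, x). (- y, x)) -` A \<inter> space (M \<Otimes>\<^sub>M M))"
    using assms(2) by (intro measure_distr) (measurable, simp)
  finally show ?thesis
    by (simp add: space_pair_measure)
qed

lemma (in real_distribution) AE_pair_fst_nonzero:
  assumes "prob {0} = 0"
  shows "AE p in M \<Otimes>\<^sub>M M. fst p \<noteq> 0"
proof -
  interpret P: pair_prob_space M M ..
  have "AE y in M. y \<noteq> 0"
    using assms by (intro AE_I[of _ _ "{0}"]) (simp_all add: emeasure_eq_measure)
  then have "AE y in M. AE x in M. fst (y, x) \<noteq> 0"
    by eventually_elim simp
  then show ?thesis
    by (rule P.AE_pair_measure[rotated]) measurable
qed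

lemma (in real_distribution) measure_symmetric_pair_cone:
  assumes sym: "distr M borel uminus = M" and atom: "prob {0} = 0" and "0 \<le> a" and "0 \<le> b"
  shows "measure (M \<Otimes>\<^sub>M M) {(y, x). 0 \<le> x \<and> 0 \<le> b * y + a * x}
    = 1/4 + measure (M \<Otimes>\<^sub>M M) {(y, x). 0 \<le> y \<and> 0 \<le> x \<and> b * y \<le> a * x}"
proof -
  interpret P: pair_prob_space M M ..
  let ?Q = "M \<Otimes>\<^sub>M M"
  have sets_Q [measurable_cong]: "sets ?Q = sets (borel \<Otimes>\<^sub>M borel)"
    by (intro sets_pair_measure_cong) simp_all
  have [measurable]: "Collect P \<in> sets ?Q" if "Measurable.pred (borel \<Otimes>\<^sub>M borel) P" for P
    using sets_borel_pair_Collect[OF that] by (simp add: sets_Q)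
  have pos_part: "{(y, x). 0 < y \<and> 0 \<le> x \<and> b * y \<le> a * x} \<in> sets (borel \<Otimes>\<^sub>M borel)"
    by (rule sets_borel_pair_Collect) measurable
  have reflect_pos_part: "(\<lambda>(y, x). (- y, x)) -` {(y, x). 0 < y \<and> 0 \<le> x \<and> b * y \<le> a * x}
      = {(y, x). y < 0 \<and> 0 \<le> x \<and> 0 \<le> b * y + a * x}"
    by auto
  have "measure ?Q {(y, x). y < 0 \<and> 0 \<le> x \<and> 0 \<le> b * y + a * x}
      = measure ?Q {(y, x). 0 < y \<and> 0 \<le> x \<and> b * y \<le> a * x}"
    using measure_pair_reflect_fst[OF sym pos_part] unfolding reflect_pos_part .
  also have "\<dots> = measure ?Q {(y, x). 0 \<le> y \<and> 0 \<le> x \<and> b * y \<le> a * x}"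
  proof (rule measure_eq_AE)
    show "AE p in ?Q. p \<in> {(y, x). 0 < y \<and> 0 \<le> x \<and> b * y \<le> a * x}
        \<longleftrightarrow> p \<in> {(y, x). 0 \<le> y \<and> 0 \<le> x \<and> b * y \<le> a * x}"
      using AE_pair_fst_nonzero[OF atom] by eventually_elim auto
  qed measurable
  finally have reflected: "measure ?Q {(y, x). y < 0 \<and> 0 \<le> x \<and> 0 \<le> b * y + a * x}
      = measure ?Q {(y, x). 0 \<le> y \<and> 0 \<le> x \<and> b * y \<le> a * x}" .
  have "0 \<le> b * y + a * x" if "0 \<le> y" and "0 \<le> x" for y x
    using assms(3,4) that by simp
  then have split: "{(y, x). 0 \<le> x \<and> 0 \<le> b * y + a * x}
      = {(y, x). 0 \<le> y \<and> 0 \<le> x} \<union> {(y, x). y < 0 \<and> 0 \<le> x \<and> 0 \<le> b * y + a * x}"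
    by (auto simp: not_le)
  have "measure ?Q ({(y, x). 0 \<le> y \<and> 0 \<le> x} \<union> {(y, x). y < 0 \<and> 0 \<le> x \<and> 0 \<le> b * y + a * x})
      = measure ?Q {(y, x). 0 \<le> y \<and> 0 \<le> x} + measure ?Q {(y, x). y < 0 \<and> 0 \<le> x \<and> 0 \<le> b * y + a * x}"
  proof (rule P.finite_measure_Union)
    show "{(y, x). 0 \<le> y \<and> 0 \<le> x} \<in> sets ?Q"
      and "{(y, x). y < 0 \<and> 0 \<le> x \<and> 0 \<le> b * y + a * x} \<in> sets ?Q"
      by measurable
  qed auto
  then show ?thesis
    by (simp only: split measure_pair_nonneg_quadrant[OF sym atom] reflected)
qed

definition std_sym_stable :: "real \<Rightarrow> real measure \<Rightarrow> bool" where
  "std_sym_stable \<alpha> \<mu> \<longleftrightarrow>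
     real_distribution \<mu> \<and> char \<mu> = (\<lambda>u. complex_of_real (exp (- (\<bar>u\<bar> powr \<alpha>))))"

lemma (in prob_space) std_sym_stable_distr:
  assumes "Z \<in> borel_measurable M"
    and "\<And>u. char (distr M borel Z) u = complex_of_real (exp (- (\<bar>u\<bar> powr \<alpha>)))"
  shows "std_sym_stable \<alpha> (distr M borel Z)"
  using assms by (simp add: std_sym_stable_def fun_eq_iff real_distribution_distr)

lemma std_sym_stable_unique: "std_sym_stable \<alpha> \<mu> \<Longrightarrow> std_sym_stable \<alpha> \<nu> \<Longrightarrow> \<mu> = \<nu>"
  unfolding std_sym_stable_def by (auto intro: Levy_uniqueness)

lemma std_sym_stable_symmetric:
  assumes "std_sym_stable \<alpha> \<mu>"
  shows "distr \<mu> borel uminus = \<mu>"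
  using assms real_distribution.distr_uminus_eq_if_char_even unfolding std_sym_stable_def by auto

lemma std_sym_stable_no_atom:
  assumes "0 < \<alpha>" and "std_sym_stable \<alpha> \<mu>"
  shows "measure \<mu> {0} = 0"
proof -
  have "filterlim (\<lambda>u. - (\<bar>u\<bar> powr \<alpha>)) at_bot at_infinity"
    using filterlim_abs_powr_at_top_at_infinity[OF assms(1)] by (simp add: filterlim_uminus_at_bot)
  then have "((\<lambda>u. exp (- (\<bar>u\<bar> powr \<alpha>))) \<longlongrightarrow> 0) at_infinity"
    by (rule filterlim_compose[OF exp_at_bot])
  then have "((\<lambda>u. complex_of_real (exp (- (\<bar>u\<bar> powr \<alpha>)))) \<longlongrightarrow> complex_of_real 0) at_infinity"
    by (rule tendsto_of_real)
  then have "(char \<mu> \<longlongrightarrow> 0) at_infinity"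
    using assms(2) by (simp add: std_sym_stable_def)
  then show ?thesis
    using assms(2) real_distribution.measure_singleton_zero_if_char_vanishes
    unfolding std_sym_stable_def by blast
qed

lemma std_sym_stable_scaled:
  assumes "0 < \<alpha>" and "0 < s" and "std_sym_stable \<alpha> \<mu>" and "real_distribution \<nu>"
    and "\<And>u. char \<nu> u = complex_of_real (exp (- (\<bar>u\<bar> powr \<alpha>) * s))"
  shows "\<nu> = distr \<mu> borel (\<lambda>x. s powr (1/\<alpha>) * x)"
proof (rule Levy_uniqueness)
  interpret real_distribution \<mu>
    using assms(3) by (simp add: std_sym_stable_def)
  show "real_distribution (distr \<mu> borel (\<lambda>x. s powr (1/\<alpha>) * x))"
    by (rule real_distribution_distr) simp
  have "(s powr (1/\<alpha>)) powr \<alpha> = s"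
    using assms(1,2) by (simp add: powr_powr)
  then show "char \<nu> = char (distr \<mu> borel (\<lambda>x. s powr (1/\<alpha>) * x))"
    using assms(2,3,5)
    by (simp add: fun_eq_iff char_distr_mult std_sym_stable_def abs_mult powr_mult)
qed (fact assms(4))

lemma (in prob_space) indep_var_of_indep_vars:
  assumes "indep_vars (\<lambda>_. N) Y I" and "i \<in> I" and "j \<in> I" and "i \<noteq> j"
  shows "indep_var N (Y i) N (Y j)"
proof -
  let ?F = "\<lambda>k. sigma_sets (space M) {Y k -` A \<inter> space M | A. A \<in> sets N}"
  have ind: "indep_sets ?F I"
    using assms(1) by (simp add: indep_vars_def)
  have "prob (a \<inter> b) = prob a * prob b" if "a \<in> ?F i" and "b \<in> ?F j" for a b
  proof -
    have "prob (\<Inter>k\<in>{i, j}. if k = i then a else b) = (\<Prod>k\<in>{i, j}. prob (if k = i then a else b))"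
      by (rule indep_setsD[OF ind]) (use assms that in auto)
    then show ?thesis
      using assms(4) by (simp add: Int_commute)
  qed
  moreover have "?F i \<subseteq> events" and "?F j \<subseteq> events"
    using ind assms(2,3) by (auto simp: indep_sets_def)
  moreover have "random_variable N (Y i)" and "random_variable N (Y j)"
    using assms(1-3) by (auto simp: indep_vars_def)
  ultimately show ?thesis
    by (simp add: indep_var_eq indep_sets2_eq)
qed

lemma (in prob_space) measure_indep_var_pair:
  assumes "indep_var S U T V" and "A \<in> sets (S \<Otimes>\<^sub>M T)"
  shows "prob {\<omega> \<in> space M. (U \<omega>, V \<omega>) \<in> A} = measure (distr M S U \<Otimes>\<^sub>M distr M T V) A"
proof -
  have [measurable]: "U \<in> measurable M S" "V \<in> measurable M T"
    and joint: "distr M S U \<Otimes>\<^sub>M distr M T V = distr M (S \<Otimes>\<^sub>M T) (\<lambda>\<omega>. (U \<omega>, V \<omega>))"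
    using assms(1) by (simp_all add: indep_var_distribution_eq)
  show ?thesis
    unfolding joint using assms(2) by (subst measure_distr) (auto intro!: arg_cong[where f=prob])
qed

lemma measure_pair_measure_distr:
  assumes "f \<in> measurable M S" and "g \<in> measurable N T" and "sigma_finite_measure (distr N T g)"
    and "A \<in> sets (S \<Otimes>\<^sub>M T)"
  shows "measure (distr M S f \<Otimes>\<^sub>M distr N T g) A
    = measure (M \<Otimes>\<^sub>M N) ((\<lambda>(x, y). (f x, g y)) -` A \<inter> space (M \<Otimes>\<^sub>M N))"
  using assms by (simp add: pair_measure_distr measure_distr)

lemma levy_process_indep_increments:
  assumes "levy_process M X" and "0 < r" and "r < t"
  shows "prob_space.indep_var M borel (\<lambda>\<omega>. X t \<omega> - X r \<omega>) borel (\<lambda>\<omega>. X r \<omega> - X 0 \<omega>)"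
proof -
  interpret prob_space M
    using assms(1) by (simp add: levy_process_def)
  let ?ts = "(!) [0, r, t]"
  have "0 \<le> ?ts 0 \<and> (\<forall>i<2. ?ts i < ?ts (Suc i))"
    using assms(2,3) by (auto simp: less_Suc_eq numeral_2_eq_2)
  then have "indep_vars (\<lambda>_. borel) (\<lambda>i \<omega>. X (?ts (Suc i)) \<omega> - X (?ts i) \<omega>) {..<2}"
    using assms(1) unfolding levy_process_def by blast
  from indep_var_of_indep_vars[OF this, of 1 0] show ?thesis
    by simp
qed

lemma levy_process_measure_increments:
  assumes levy: "levy_process M X" and "0 < r" and "r < t"
    and [measurable]: "A \<in> sets (borel \<Otimes>\<^sub>M borel)"
  shows "measure M {\<omega> \<in> space M. (X t \<omega> - X r \<omega>, X r \<omega>) \<in> A}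
    = measure (distr M borel (X (t - r)) \<Otimes>\<^sub>M distr M borel (X r)) A"
proof -
  interpret prob_space M
    using levy by (simp add: levy_process_def)
  have [measurable]:
      "X 0 \<in> borel_measurable M" "X r \<in> borel_measurable M" "X t \<in> borel_measurable M"
    using levy assms(2,3) by (simp_all add: levy_process_def)
  have stationary: "distr M borel (\<lambda>\<omega>. X t' \<omega> - X s \<omega>) = distr M borel (X (t' - s))"
    if "0 \<le> s" and "s \<le> t'" for s t'
    using levy that by (simp add: levy_process_def)
  have "AE \<omega> in M. X 0 \<omega> = 0"
    using levy by (simp add: levy_process_def)
  then have "prob {\<omega> \<in> space M. (X t \<omega> - X r \<omega>, X r \<omega>) \<in> A}
      = prob {\<omega> \<in> space M. (X t \<omega> - X r \<omega>, X r \<omega> - X 0 \<omega>) \<in> A}"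
    by (intro measure_eq_AE) (auto elim!: AE_mp)
  also have "\<dots> = measure
      (distr M borel (\<lambda>\<omega>. X t \<omega> - X r \<omega>) \<Otimes>\<^sub>M distr M borel (\<lambda>\<omega>. X r \<omega> - X 0 \<omega>)) A"
    by (rule measure_indep_var_pair[OF levy_process_indep_increments[OF levy assms(2,3)] assms(4)])
  also have "\<dots> = measure (distr M borel (X (t - r)) \<Otimes>\<^sub>M distr M borel (X r)) A"
    using stationary[of r t] stationary[of 0 r] assms(2,3) by simp
  finally show ?thesis .
qed

lemma levy_process_std_sym_stable_nonneg:
  assumes levy: "levy_process M X" and "0 < \<alpha>" and "0 < r" and "r < t"
    and char: "\<And>s u. 0 \<le> s \<Longrightarrow>
      char (distr M borel (X s)) u = complex_of_real (exp (- (\<bar>u\<bar> powr \<alpha>) * s))"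
    and \<mu>: "std_sym_stable \<alpha> \<mu>"
  shows "measure M {\<omega> \<in> space M. X r \<omega> \<ge> 0 \<and> X t \<omega> \<ge> 0}
    = measure (\<mu> \<Otimes>\<^sub>M \<mu>) {(y, x). 0 \<le> x \<and> 0 \<le> (t - r) powr (1/\<alpha>) * y + r powr (1/\<alpha>) * x}"
proof -
  interpret M: prob_space M
    using levy by (simp add: levy_process_def)
  interpret \<mu>: real_distribution \<mu>
    using \<mu> by (simp add: std_sym_stable_def)
  define a where "a = r powr (1/\<alpha>)"
  define b where "b = (t - r) powr (1/\<alpha>)"
  let ?H = "{(y, x). 0 \<le> x \<and> 0 \<le> y + (x::real)}"
  have H [measurable]: "?H \<in> sets (borel \<Otimes>\<^sub>M borel)"
    by (rule sets_borel_pair_Collect) measurable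
  have X: "distr M borel (X s) = distr \<mu> borel (\<lambda>x. s powr (1/\<alpha>) * x)" if "0 < s" for s
    using levy char that
    by (intro std_sym_stable_scaled[OF assms(2) that \<mu>] M.real_distribution_distr)
      (simp_all add: levy_process_def)
  have "0 < a" and "0 < b"
    using assms(3,4) by (simp_all add: a_def b_def)
  then have cone: "(\<lambda>(y, x). (b * y, a * x)) -` ?H \<inter> space (\<mu> \<Otimes>\<^sub>M \<mu>)
      = {(y, x). 0 \<le> x \<and> 0 \<le> b * y + a * x}"
    by (auto simp: space_pair_measure zero_le_mult_iff)
  have "measure M {\<omega> \<in> space M. X r \<omega> \<ge> 0 \<and> X t \<omega> \<ge> 0}
      = measure M {\<omega> \<in> space M. (X t \<omega> - X r \<omega>, X r \<omega>) \<in> ?H}"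
    by simp
  also have "\<dots> = measure (distr M borel (X (t - r)) \<Otimes>\<^sub>M distr M borel (X r)) ?H"
    by (rule levy_process_measure_increments[OF levy assms(3,4) H])
  also have "\<dots> = measure (distr \<mu> borel (\<lambda>x. b * x) \<Otimes>\<^sub>M distr \<mu> borel (\<lambda>x. a * x)) ?H"
    using assms(3,4) by (simp add: X a_def b_def)
  also have "\<dots> = measure (\<mu> \<Otimes>\<^sub>M \<mu>) ((\<lambda>(y, x). (b * y, a * x)) -` ?H \<inter> space (\<mu> \<Otimes>\<^sub>M \<mu>))"
    by (intro measure_pair_measure_distr prob_space_imp_sigma_finite \<mu>.prob_space_distr H;
        measurable)
  finally show ?thesis
    unfolding cone unfolding a_def b_def .
qed

theorem lemma8:
  fixes M :: "'a measure" and X :: "real \<Rightarrow> 'a \<Rightarrow> real"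
    and N :: "'b measure" and Z Z' :: "'b \<Rightarrow> real"
    and \<alpha> r t :: real
  assumes "0 < \<alpha>" and "\<alpha> \<le> 2"
    and "levy_process M X"
    and "\<And>s u. 0 \<le> s \<Longrightarrow>
           char (distr M borel (X s)) u = complex_of_real (exp (- (\<bar>u\<bar> powr \<alpha>) * s))"
    and "prob_space N"
    and "Z \<in> borel_measurable N" and "Z' \<in> borel_measurable N"
    and "prob_space.indep_var N borel Z borel Z'"
    and "\<And>u. char (distr N borel Z) u = complex_of_real (exp (- (\<bar>u\<bar> powr \<alpha>)))"
    and "\<And>u. char (distr N borel Z') u = complex_of_real (exp (- (\<bar>u\<bar> powr \<alpha>)))"
    and "0 < r" and "r < t"
  shows "measure M {\<omega> \<in> space M. X r \<omega> \<ge> 0 \<and> X t \<omega> \<ge> 0}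
         = 1/4 + measure N {\<omega> \<in> space N. Z \<omega> \<ge> 0 \<and> Z' \<omega> \<ge> 0 \<and>
               (t - r) powr (1/\<alpha>) * Z \<omega> \<le> r powr (1/\<alpha>) * Z' \<omega>}"
proof -
  interpret N: prob_space N by fact
  define a where "a = r powr (1/\<alpha>)"
  define b where "b = (t - r) powr (1/\<alpha>)"
  let ?T = "{(y, x). 0 \<le> y \<and> 0 \<le> x \<and> b * y \<le> a * x}"
  define \<mu> where "\<mu> = distr N borel Z"
  have \<mu>: "std_sym_stable \<alpha> \<mu>"
    unfolding \<mu>_def using assms(6,9) by (rule N.std_sym_stable_distr)
  then interpret \<mu>: real_distribution \<mu>
    by (simp add: std_sym_stable_def)
  have "distr N borel Z' = \<mu>"
    using N.std_sym_stable_distr[OF assms(7,10)] \<mu> by (rule std_sym_stable_unique)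
  moreover have "?T \<in> sets (borel \<Otimes>\<^sub>M borel)"
    by (rule sets_borel_pair_Collect) measurable
  ultimately have iid: "measure N {\<omega> \<in> space N. (Z \<omega>, Z' \<omega>) \<in> ?T} = measure (\<mu> \<Otimes>\<^sub>M \<mu>) ?T"
    by (subst N.measure_indep_var_pair[OF assms(8)]) (simp_all add: \<mu>_def)
  have "measure M {\<omega> \<in> space M. X r \<omega> \<ge> 0 \<and> X t \<omega> \<ge> 0}
      = measure (\<mu> \<Otimes>\<^sub>M \<mu>) {(y, x). 0 \<le> x \<and> 0 \<le> b * y + a * x}"
    unfolding a_def b_def
    by (rule levy_process_std_sym_stable_nonneg[OF assms(3,1,11,12) _ \<mu>]) (fact assms(4))
  also have "\<dots> = 1/4 + measure (\<mu> \<Otimes>\<^sub>M \<mu>) ?T"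
    using \<mu> assms(11,12)
    by (intro \<mu>.measure_symmetric_pair_cone std_sym_stable_symmetric
        std_sym_stable_no_atom[OF assms(1)]) (simp_all add: a_def b_def)
  also have "\<dots> = 1/4 + measure N {\<omega> \<in> space N. Z \<omega> \<ge> 0 \<and> Z' \<omega> \<ge> 0 \<and> b * Z \<omega> \<le> a * Z' \<omega>}"
    unfolding iid[symmetric] by simp
  finally show ?thesis
    unfolding a_def b_def .
qed

end
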